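(* Let $a\in\mathbb{C}$ with $2a$, $a$, $a+\tfrac12$, $a+1$ not nonpositive integers. Then for every integer $n\ge0$ and every $x\in\mathbb{C}$: $${}_2F_1\!\left(\begin{matrix}-2n,\,a+ix\\ 2a\end{matrix};2\right)={}_3F_2\!\left(\begin{matrix}-n,\,a+ix,\,a-ix\\ a+\frac12,\,a\end{matrix};1\right),\qquad {}_2F_1\!\left(\begin{matrix}-2n-1,\,a+ix\\ 2a\end{matrix};2\right)=\frac{x}{ia}\,{}_3F_2\!\left(\begin{matrix}-n,\,a+ix,\,a-ix\\ a+\frac12,\,a+1\end{matrix};1\right).$$ (That is, for Meixner-Pollaczek and continuous dual Hahn polynomials, $\frac{P_{2n}^{(a)}(x;\frac\pi2)}{P_{2n}^{(a)}(ia;\frac\pi2)}=\frac{S_n(x^2;a,\frac12,0)}{S_n(-a^2;a,\frac12,0)}$ and $\frac{P_{2n+1}^{(a)}(x;\frac\pi2)}{P_{2n+1}^{(a)}(ia;\frac\pi2)}=\frac{x\,S_n(x^2;a,\frac12,1)}{ia\,S_n(-a^2;a,\frac12,1)}$.)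
   Context: ${}_rF_s$ is the generalized hypergeometric series $\sum_k\frac{(a_1)_k\cdots(a_r)_k}{(b_1)_k\cdots(b_s)_k\,k!}z^k$, $(c)_k=c(c+1)\cdots(c+k-1)$; all series terminate. Meixner-Pollaczek: $P_n^{(\lambda)}(x;\phi)/P_n^{(\lambda)}(i\lambda;\phi)={}_2F_1(-n,\lambda+ix;2\lambda;1-e^{-2i\phi})$. Continuous dual Hahn: $S_n(x^2;a,b,c)/S_n(-a^2;a,b,c)={}_3F_2(-n,a+ix,a-ix;a+b,a+c;1)$. *)

theory Defs
  imports "HOL-Analysis.Analysis"
begin

text \<open>Terminating generalized hypergeometric series: the numerator parameter
  list starts with -N for a natural number N, so all terms with index k > N vanish
  (pochhammer (-N) k = 0 for k > N) and the series is the finite sum below.\<close>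
definition hypF_term :: "complex list \<Rightarrow> complex list \<Rightarrow> complex \<Rightarrow> nat \<Rightarrow> complex" where
  "hypF_term as bs z k =
     (\<Prod>a\<leftarrow>as. pochhammer a k) / ((\<Prod>b\<leftarrow>bs. pochhammer b k) * fact k) * z ^ k"

definition hypF_term_series :: "nat \<Rightarrow> complex list \<Rightarrow> complex list \<Rightarrow> complex \<Rightarrow> complex" where
  "hypF_term_series N as bs z = (\<Sum>k\<le>N. hypF_term (- of_nat N # as) bs z k)"

end

theory Submission
  imports Defs
begin

text \<open>With the binomial factor of the terminating parameter split off, both sides become
  binomial sums. The even and odd parts of the Meixner-Pollaczek recurrence
  (2a + N) F(N+1) = -2y F(N) + N F(N-1) for F(N) = 2F1(-N, a + y; 2a; 2) are matched by two
  contiguous relations between the 3F2 sums with lower parameters (a + 1/2, a) and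
  (a + 1/2, a + 1), so the identity follows by induction on n.\<close>

definition binomial_sum :: "nat \<Rightarrow> (nat \<Rightarrow> 'a::comm_ring_1) \<Rightarrow> 'a" where
  "binomial_sum N f = (\<Sum>k\<le>N. of_nat (N choose k) * f k)"

lemma binomial_sum_atMost:
  "N \<le> M \<Longrightarrow> binomial_sum N f = (\<Sum>k\<le>M. of_nat (N choose k) * f k)"
  unfolding binomial_sum_def by (rule sum.mono_neutral_left) (auto simp: binomial_eq_0)

lemma binomial_sum_add: "binomial_sum N (\<lambda>k. f k + g k) = binomial_sum N f + binomial_sum N g"
  unfolding binomial_sum_def by (simp add: sum.distrib algebra_simps)

lemma binomial_sum_mult_left: "binomial_sum N (\<lambda>k. c * f k) = c * binomial_sum N f"
  unfolding binomial_sum_def by (simp add: sum_distrib_left algebra_simps)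

lemma binomial_sum_cong: "(\<And>k. k \<le> N \<Longrightarrow> f k = g k) \<Longrightarrow> binomial_sum N f = binomial_sum N g"
  unfolding binomial_sum_def by (rule sum.cong) auto

lemma binomial_sum_Suc:
  "binomial_sum (Suc N) f = binomial_sum N f + binomial_sum N (\<lambda>k. f (Suc k))"
proof -
  have "binomial_sum (Suc N) f = f 0 + (\<Sum>k\<le>N. of_nat (Suc N choose Suc k) * f (Suc k))"
    unfolding binomial_sum_def by (subst sum.atMost_Suc_shift) simp
  also have "\<dots> = (f 0 + (\<Sum>k\<le>N. of_nat (N choose Suc k) * f (Suc k)))
                  + binomial_sum N (\<lambda>k. f (Suc k))"
    unfolding binomial_sum_def by (simp add: sum.distrib algebra_simps)
  also have "f 0 + (\<Sum>k\<le>N. of_nat (N choose Suc k) * f (Suc k)) = binomial_sum N f"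
    by (simp add: binomial_sum_atMost[of N "Suc N"] sum.atMost_Suc_shift del: sum.atMost_Suc)
  finally show ?thesis .
qed

lemma diff_times_binomial: "(N - k) * (N choose k) = Suc k * (N choose Suc k)"
proof (cases N)
  case (Suc m)
  then show ?thesis using binomial_absorb_comp[of N k] Suc_times_binomial[of k m] by simp
qed (cases k; simp)

lemma binomial_sum_telescope:
  "binomial_sum N (\<lambda>k. (of_nat N - of_nat k) * f (Suc k) - of_nat k * f k) = 0"
proof -
  define T where "T k = of_nat k * of_nat (N choose k) * f k" for k
  have absorb: "(of_nat N - of_nat k) * of_nat (N choose k) = (of_nat (Suc k) * of_nat (N choose Suc k) :: 'a)"
    for k
  proof (cases "k \<le> N")
    case True
    then show ?thesis
      using arg_cong[OF diff_times_binomial[of N k], of "of_nat :: nat \<Rightarrow> 'a"]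
      by (simp only: of_nat_mult of_nat_diff)
  qed (simp add: binomial_eq_0)
  have "binomial_sum N (\<lambda>k. (of_nat N - of_nat k) * f (Suc k) - of_nat k * f k)
          = (\<Sum>k<Suc N. T (Suc k) - T k)"
    unfolding binomial_sum_def lessThan_Suc_atMost
    by (intro sum.cong refl) (simp only: T_def absorb[symmetric]; simp add: algebra_simps)
  also have "\<dots> = 0"
    by (subst sum_lessThan_telescope) (simp add: T_def binomial_eq_0)
  finally show ?thesis .
qed

lemma binomial_sum_absorb:
  "binomial_sum (Suc m) (\<lambda>k. (of_nat (Suc m) - of_nat k) * f k) = of_nat (Suc m) * binomial_sum m f"
proof -
  have absorb: "(of_nat (Suc m) - of_nat k) * of_nat (Suc m choose k) = (of_nat (Suc m) * of_nat (m choose k) :: 'a)"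
    if "k \<le> Suc m" for k
    using arg_cong[OF binomial_absorb_comp[of "Suc m" k], of "of_nat :: nat \<Rightarrow> 'a"]
    by (simp only: of_nat_mult of_nat_diff[OF that] diff_Suc_1)
  have "binomial_sum (Suc m) (\<lambda>k. (of_nat (Suc m) - of_nat k) * f k)
          = (\<Sum>k\<le>Suc m. of_nat (Suc m) * (of_nat (m choose k) * f k))"
    unfolding binomial_sum_def by (intro sum.cong refl) (metis absorb atMost_iff mult.assoc mult.commute)
  also have "\<dots> = of_nat (Suc m) * binomial_sum m f"
    by (simp add: binomial_sum_atMost[of m "Suc m"] sum_distrib_left del: sum.atMost_Suc)
  finally show ?thesis .
qed

lemma hypF_term_series_eq_binomial_sum:
  "hypF_term_series N as bs z =
     binomial_sum N (\<lambda>k. (-z)^k * (\<Prod>a\<leftarrow>as. pochhammer a k) / (\<Prod>b\<leftarrow>bs. pochhammer b k))"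
  unfolding hypF_term_series_def binomial_sum_def
proof (intro sum.cong refl)
  fix k
  have "pochhammer (- of_nat N :: complex) k / fact k = (-1)^k * of_nat (N choose k)"
    by (simp add: binomial_gbinomial gbinomial_pochhammer)
  moreover have "((-1)^k * (-1)^k :: complex) = 1"
    by (simp flip: power_mult_distrib)
  ultimately show "hypF_term (- of_nat N # as) bs z k =
      of_nat (N choose k) * ((-z)^k * (\<Prod>a\<leftarrow>as. pochhammer a k) / (\<Prod>b\<leftarrow>bs. pochhammer b k))"
    unfolding hypF_term_def power_minus[of z]
    by (simp add: divide_inverse mult_ac)
qed

lemma pochhammer_neq_0:
  fixes c :: "'a::field_char_0"
  assumes "\<And>k. c + of_nat k \<noteq> 0"
  shows "pochhammer c n \<noteq> 0"
proof
  assume "pochhammer c n = 0"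
  then obtain k where "c = - of_nat k"
    by (auto simp: pochhammer_eq_0_iff)
  with assms[of k] show False by simp
qed

lemma binomial_sum_three_term_recurrence:
  fixes b c :: complex
  defines "s \<equiv> \<lambda>k. (-2)^k * pochhammer b k / pochhammer c k"
  assumes c: "\<And>k. c + of_nat k \<noteq> 0"
  shows "(c + of_nat (Suc N)) * binomial_sum (Suc (Suc N)) s
           = (c - 2*b) * binomial_sum (Suc N) s + of_nat (Suc N) * binomial_sum N s"
proof -
  define M where "M = Suc N"
  have ratio: "(c + of_nat k) * s (Suc k) = -2 * (b + of_nat k) * s k" for k
    using c[of k] pochhammer_neq_0[OF c, of k]
    unfolding s_def by (simp add: pochhammer_Suc divide_simps) (simp add: algebra_simps)
  have "(c + of_nat M) * (s k + s (Suc k))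
          = (c - 2*b) * s k + (of_nat M - of_nat k) * s k
            + ((of_nat M - of_nat k) * s (Suc k) - of_nat k * s k)" for k
  proof -
    have "(c + of_nat M) * s (Suc k) = (c + of_nat k) * s (Suc k) + (of_nat M - of_nat k) * s (Suc k)"
      by (simp add: algebra_simps)
    also have "\<dots> = -2 * (b + of_nat k) * s k + (of_nat M - of_nat k) * s (Suc k)"
      by (simp only: ratio)
    finally show ?thesis by (simp add: algebra_simps)
  qed
  then have "(c + of_nat M) * binomial_sum (Suc M) s
      = (c - 2*b) * binomial_sum M s + binomial_sum M (\<lambda>k. (of_nat M - of_nat k) * s k)
        + binomial_sum M (\<lambda>k. (of_nat M - of_nat k) * s (Suc k) - of_nat k * s k)"
    by (simp only: binomial_sum_Suc distrib_left binomial_sum_add binomial_sum_mult_left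
                   flip: binomial_sum_add binomial_sum_mult_left)
  then show ?thesis
    unfolding M_def binomial_sum_absorb binomial_sum_telescope by simp
qed

locale quadratic_2F1 =
  fixes a y :: complex
  assumes two_a_nz: "\<And>k. 2 * a + of_nat k \<noteq> 0"
      and a_nz: "\<And>k. a + of_nat k \<noteq> 0"
      and a_half_nz: "\<And>k. a + 1/2 + of_nat k \<noteq> 0"
begin

definition mp_term :: "nat \<Rightarrow> complex" where
  "mp_term k = (-2)^k * pochhammer (a + y) k / pochhammer (2 * a) k"

definition even_term :: "nat \<Rightarrow> complex" where
  "even_term j = (-1)^j * (pochhammer (a + y) j * pochhammer (a - y) j)
                   / (pochhammer (a + 1/2) j * pochhammer a j)"

definition odd_term :: "nat \<Rightarrow> complex" where
  "odd_term j = (-1)^j * (pochhammer (a + y) j * pochhammer (a - y) j)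
                  / (pochhammer (a + 1/2) j * pochhammer (a + 1) j)"

lemma a_neq_0: "a \<noteq> 0"
  using a_nz[of 0] by simp

lemma pochhammer_params_neq_0:
  "pochhammer a j \<noteq> 0" "pochhammer (a + 1) j \<noteq> 0" "pochhammer (a + 1/2) j \<noteq> 0"
proof -
  have "a + 1 + of_nat k \<noteq> 0" for k
    using a_nz[of "Suc k"] by (simp add: add.assoc)
  then show "pochhammer a j \<noteq> 0" "pochhammer (a + 1) j \<noteq> 0" "pochhammer (a + 1/2) j \<noteq> 0"
    using a_nz a_half_nz by (simp_all add: pochhammer_neq_0)
qed

lemma odd_term_eq: "(a + of_nat j) * odd_term j = a * even_term j"
proof -
  have "pochhammer a j * (a + of_nat j) = a * pochhammer (a + 1) j"
    by (simp flip: pochhammer_Suc pochhammer_rec)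
  then show ?thesis
    using a_nz[of j] pochhammer_params_neq_0[of j] unfolding odd_term_def even_term_def
    by (simp add: divide_simps) (metis mult.assoc mult.commute)
qed

lemma even_term_Suc:
  "(a + 1/2 + of_nat j) * (a + of_nat j) * even_term (Suc j) = (y^2 - (a + of_nat j)^2) * even_term j"
proof -
  have numerator: "(-1)^Suc j * (pochhammer (a + y) (Suc j) * pochhammer (a - y) (Suc j))
      = (-1)^j * (pochhammer (a + y) j * pochhammer (a - y) j) * (y^2 - (a + of_nat j)^2)"
    by (simp add: pochhammer_Suc power2_eq_square algebra_simps)
  have denominator: "pochhammer (a + 1/2) (Suc j) * pochhammer a (Suc j)
      = (pochhammer (a + 1/2) j * pochhammer a j) * ((a + 1/2 + of_nat j) * (a + of_nat j))"
    by (simp add: pochhammer_Suc algebra_simps)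
  have cancel: "c * (X * q / (D * c)) = q * (X / D)" if "c \<noteq> 0" for c X q D :: complex
    using that by (cases "D = 0") (simp_all add: field_simps)
  show ?thesis
    unfolding even_term_def numerator denominator
    by (rule cancel) (simp add: a_nz a_half_nz)
qed

lemma odd_term_contiguous:
  "(2 * y^2 / a) * odd_term j = 2 * (a + of_nat j) * even_term j + (2*a + 2 * of_nat j + 1) * even_term (Suc j)"
proof -
  have "(a + of_nat j) * ((2 * y^2 / a) * odd_term j) = (2 * y^2 / a) * ((a + of_nat j) * odd_term j)"
    by (simp only: mult_ac)
  also have "\<dots> = 2 * y^2 * even_term j"
    using a_neq_0 by (simp add: odd_term_eq)
  also have "\<dots> = 2 * (a + of_nat j)^2 * even_term j + 2 * ((y^2 - (a + of_nat j)^2) * even_term j)"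
    by (simp add: algebra_simps)
  also have "\<dots> = 2 * (a + of_nat j)^2 * even_term j
                     + 2 * ((a + 1/2 + of_nat j) * (a + of_nat j) * even_term (Suc j))"
    by (simp only: even_term_Suc)
  also have "\<dots> = (a + of_nat j) * (2 * (a + of_nat j) * even_term j + (2*a + 2 * of_nat j + 1) * even_term (Suc j))"
    by (simp add: algebra_simps power2_eq_square)
  finally show ?thesis
    using mult_left_cancel[OF a_nz[of j]] by blast
qed

lemma binomial_sum_even_term_Suc:
  "(2*a + 2 * of_nat n + 1) * binomial_sum (Suc n) even_term
     = (2 * y^2 / a) * binomial_sum n odd_term + (2 * of_nat n + 1) * binomial_sum n even_term"
proof -
  have "(2*a + 2 * of_nat n + 1) * (even_term k + even_term (Suc k))
          = (2 * y^2 / a) * odd_term k + (2 * of_nat n + 1) * even_term k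
            + 2 * ((of_nat n - of_nat k) * even_term (Suc k) - of_nat k * even_term k)" for k
    by (simp only: odd_term_contiguous) (simp add: algebra_simps)
  then have "(2*a + 2 * of_nat n + 1) * binomial_sum (Suc n) even_term
      = (2 * y^2 / a) * binomial_sum n odd_term + (2 * of_nat n + 1) * binomial_sum n even_term
        + 2 * binomial_sum n (\<lambda>k. (of_nat n - of_nat k) * even_term (Suc k) - of_nat k * even_term k)"
    by (simp only: binomial_sum_Suc distrib_left binomial_sum_add binomial_sum_mult_left
                   flip: binomial_sum_add binomial_sum_mult_left)
  then show ?thesis
    unfolding binomial_sum_telescope by simp
qed

lemma binomial_sum_odd_term_Suc:
  "(a + of_nat (Suc n)) * binomial_sum (Suc n) odd_term
     = a * binomial_sum (Suc n) even_term + of_nat (Suc n) * binomial_sum n odd_term"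
proof -
  have pointwise: "a * even_term k + (of_nat (Suc n) - of_nat k) * odd_term k
                    = (a + of_nat (Suc n)) * odd_term k" for k
    by (simp only: odd_term_eq[symmetric]) (simp add: algebra_simps)
  have "a * binomial_sum (Suc n) even_term + of_nat (Suc n) * binomial_sum n odd_term
      = binomial_sum (Suc n) (\<lambda>k. a * even_term k + (of_nat (Suc n) - of_nat k) * odd_term k)"
    by (simp only: binomial_sum_add binomial_sum_mult_left binomial_sum_absorb)
  also have "\<dots> = (a + of_nat (Suc n)) * binomial_sum (Suc n) odd_term"
    by (simp only: pointwise binomial_sum_mult_left)
  finally show ?thesis ..
qed

lemma binomial_sum_mp_term_recurrence:
  "(2*a + of_nat (Suc N)) * binomial_sum (Suc (Suc N)) mp_term
     = -2*y * binomial_sum (Suc N) mp_term + of_nat (Suc N) * binomial_sum N mp_term"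
proof -
  have "2*a - 2*(a + y) = -2*y" by simp
  then show ?thesis
    using binomial_sum_three_term_recurrence[OF two_a_nz, where b = "a + y" and N = N]
    unfolding mp_term_def[abs_def] by simp
qed

lemma binomial_sum_mp_term_parity:
  "binomial_sum (2*m) mp_term = binomial_sum m even_term
   \<and> binomial_sum (Suc (2*m)) mp_term = (-y/a) * binomial_sum m odd_term"
proof (induction m)
  case 0
  have "1 + (-2) * (a + y) / (2*a) = -y/a"
    using a_neq_0 by (simp add: field_simps)
  then show ?case
    by (simp add: binomial_sum_def mp_term_def even_term_def odd_term_def)
next
  case (Suc m)
  have even_nz: "2*a + of_nat (Suc (2*m)) \<noteq> 0"
    using a_half_nz[of m] by (simp add: field_simps)
  have odd_nz: "2*a + of_nat (Suc (Suc (2*m))) \<noteq> 0"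
    using two_a_nz by blast
  have "(2*a + of_nat (Suc (2*m))) * binomial_sum (2 * Suc m) mp_term
      = (2 * y^2 / a) * binomial_sum m odd_term + (2 * of_nat m + 1) * binomial_sum m even_term"
    using binomial_sum_mp_term_recurrence[of "2*m"] Suc.IH by (simp add: power2_eq_square algebra_simps)
  also have "\<dots> = (2*a + of_nat (Suc (2*m))) * binomial_sum (Suc m) even_term"
    using binomial_sum_even_term_Suc[of m] by (simp add: add_ac)
  finally have even: "binomial_sum (2 * Suc m) mp_term = binomial_sum (Suc m) even_term"
    using even_nz by simp
  have "(2*a + of_nat (Suc (Suc (2*m)))) * binomial_sum (Suc (2 * Suc m)) mp_term
      = -2*y * binomial_sum (Suc m) even_term + (2 * of_nat (Suc m)) * ((-y/a) * binomial_sum m odd_term)"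
    using binomial_sum_mp_term_recurrence[of "Suc (2*m)"] Suc.IH even by simp
  also have "\<dots> = (-2*y/a) * (a * binomial_sum (Suc m) even_term + of_nat (Suc m) * binomial_sum m odd_term)"
    using a_neq_0 by (simp add: field_simps)
  also have "\<dots> = (-2*y/a) * ((a + of_nat (Suc m)) * binomial_sum (Suc m) odd_term)"
    by (simp only: binomial_sum_odd_term_Suc)
  also have "\<dots> = (2*a + of_nat (Suc (Suc (2*m)))) * ((-y/a) * binomial_sum (Suc m) odd_term)"
    by (simp add: algebra_simps)
  finally have odd: "binomial_sum (Suc (2 * Suc m)) mp_term = (-y/a) * binomial_sum (Suc m) odd_term"
    using mult_left_cancel[OF odd_nz] by blast
  from even odd show ?case ..
qed

end

theorem mainTheorem13:
  fixes a x :: complex and n :: nat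
  assumes "\<forall>m::nat. 2 * a \<noteq> - of_nat m"
      and "\<forall>m::nat. a \<noteq> - of_nat m"
      and "\<forall>m::nat. a + 1/2 \<noteq> - of_nat m"
      and "\<forall>m::nat. a + 1 \<noteq> - of_nat m"
  shows "hypF_term_series (2 * n) [a + \<i> * x] [2 * a] 2
           = hypF_term_series n [a + \<i> * x, a - \<i> * x] [a + 1/2, a] 1
         \<and> hypF_term_series (2 * n + 1) [a + \<i> * x] [2 * a] 2
           = x / (\<i> * a) * hypF_term_series n [a + \<i> * x, a - \<i> * x] [a + 1/2, a + 1] 1"
proof -
  interpret quadratic_2F1 a "\<i> * x"
    by unfold_locales (use assms(1-3) in \<open>auto simp: eq_neg_iff_add_eq_0\<close>)
  have "hypF_term_series N [a + \<i> * x] [2 * a] 2 = binomial_sum N mp_term" for N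
    unfolding hypF_term_series_eq_binomial_sum by (rule binomial_sum_cong) (simp add: mp_term_def)
  moreover have "hypF_term_series n [a + \<i> * x, a - \<i> * x] [a + 1/2, a] 1 = binomial_sum n even_term"
    unfolding hypF_term_series_eq_binomial_sum by (rule binomial_sum_cong) (simp add: even_term_def)
  moreover have "hypF_term_series n [a + \<i> * x, a - \<i> * x] [a + 1/2, a + 1] 1 = binomial_sum n odd_term"
    unfolding hypF_term_series_eq_binomial_sum by (rule binomial_sum_cong) (simp add: odd_term_def)
  moreover have "x / (\<i> * a) = - (\<i> * x) / a"
    using a_neq_0 by (simp add: field_simps)
  ultimately show ?thesis
    using binomial_sum_mp_term_parity[of n] by simp
qed

end
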